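(* Let $X$ be a Hilbert space, $B$ a bounded self-adjoint operator on $X$ with $\rho(B)=\|B\|=1$ such that $-1$ is not an eigenvalue of $B$, and $f\in X$ such that $x=Bx+f$ is solvable. Fix $x_0\in X$, let $x_{n+1}=Bx_n+f$, and let $x_*$ be the solution with $Px_*=Px_0$, where $P$ is the orthogonal projection onto $\ker(I-B)$. Let $(f_n)\subset X$ satisfy $\|f_n-f\|\le\delta_n$ with $\delta_n\ge0$ and $(\delta_n)\in L$, and define $\tilde x_0=x_0$, $\tilde x_{n+1}=B\tilde x_n+f_n$. Put $\delta=\|(\delta_n)\|_L$. Then $\|\tilde x_n-x_*\|\le\|x_n-x_*\|+\|\sigma_n\|\,\delta$ for all $n$, and the approximations quasi-converge to $x_*$: for every $\varepsilon>0$ there is $N(\varepsilon)$ such that for all $N(\varepsilon)\le N_-<N_+$ there is $\eta>0$ such that $\|(\delta_n)\|_L<\eta$ implies $\|\tilde x_n-x_*\|<\varepsilon$ for all $n\in[N_-,N_+]$; i.e. $\lim_{n\to\infty,\ \|\sigma_n\|\delta\to0}\|\tilde x_n-x_*\|=0$.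
   Context: $L$ is a Banach space of real sequences $(a_k)_{k\ge0}$ with monotone norm (if $|a_k|\le|b_k|$ for all $k$ then $\|(a_k)\|_L\le\|(b_k)\|_L$), on which each linear functional $\sigma_n((a_k))=a_0+a_1+\dots+a_{n-1}$ ($\sigma_0=0$) is bounded; $\|\sigma_n\|$ denotes its norm as a functional on $L$. $I$ is the identity. *)

theory Defs
  imports "HOL-Analysis.Analysis"
begin

definition seq_banach_space :: "(nat \<Rightarrow> real) set \<Rightarrow> ((nat \<Rightarrow> real) \<Rightarrow> real) \<Rightarrow> bool" where
  "seq_banach_space Ls nL \<longleftrightarrow>
     (\<lambda>k. 0) \<in> Ls \<and>
     (\<forall>a\<in>Ls. \<forall>b\<in>Ls. (\<lambda>k. a k + b k) \<in> Ls) \<and>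
     (\<forall>a\<in>Ls. \<forall>c::real. (\<lambda>k. c * a k) \<in> Ls) \<and>
     (\<forall>a\<in>Ls. nL a \<ge> 0 \<and> (nL a = 0 \<longleftrightarrow> a = (\<lambda>k. 0))) \<and>
     (\<forall>a\<in>Ls. \<forall>c::real. nL (\<lambda>k. c * a k) = \<bar>c\<bar> * nL a) \<and>
     (\<forall>a\<in>Ls. \<forall>b\<in>Ls. nL (\<lambda>k. a k + b k) \<le> nL a + nL b) \<and>
     (\<forall>s::nat \<Rightarrow> (nat \<Rightarrow> real). (\<forall>m. s m \<in> Ls) \<and>
        (\<forall>e>0. \<exists>M. \<forall>m\<ge>M. \<forall>m'\<ge>M. nL (\<lambda>k. s m k - s m' k) < e) \<longrightarrow>
        (\<exists>a\<in>Ls. (\<lambda>m. nL (\<lambda>k. s m k - a k)) \<longlonglongrightarrow> 0))"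

definition monotone_seq_norm :: "(nat \<Rightarrow> real) set \<Rightarrow> ((nat \<Rightarrow> real) \<Rightarrow> real) \<Rightarrow> bool" where
  "monotone_seq_norm Ls nL \<longleftrightarrow>
     (\<forall>a\<in>Ls. \<forall>b\<in>Ls. (\<forall>k. \<bar>a k\<bar> \<le> \<bar>b k\<bar>) \<longrightarrow> nL a \<le> nL b)"

definition sigma :: "nat \<Rightarrow> (nat \<Rightarrow> real) \<Rightarrow> real" where
  "sigma n a = (\<Sum>k<n. a k)"

definition sigmas_bounded :: "(nat \<Rightarrow> real) set \<Rightarrow> ((nat \<Rightarrow> real) \<Rightarrow> real) \<Rightarrow> bool" where
  "sigmas_bounded Ls nL \<longleftrightarrow> (\<forall>n. \<exists>C. \<forall>a\<in>Ls. \<bar>sigma n a\<bar> \<le> C * nL a)"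

definition sigma_norm :: "(nat \<Rightarrow> real) set \<Rightarrow> ((nat \<Rightarrow> real) \<Rightarrow> real) \<Rightarrow> nat \<Rightarrow> real" where
  "sigma_norm Ls nL n = Sup {\<bar>sigma n a\<bar> | a. a \<in> Ls \<and> nL a \<le> 1}"

definition spectrum_op :: "('a::real_normed_vector \<Rightarrow> 'a) \<Rightarrow> real set" where
  "spectrum_op B = {c. \<not> bij (\<lambda>x. c *\<^sub>R x - B x)}"

definition spectral_radius_op :: "('a::real_normed_vector \<Rightarrow> 'a) \<Rightarrow> real" where
  "spectral_radius_op B = Sup (abs ` spectrum_op B)"

definition orth_proj :: "'a::real_inner set \<Rightarrow> 'a \<Rightarrow> 'a" where
  "orth_proj K x = (THE p. p \<in> K \<and> (\<forall>k\<in>K. inner (x - p) k = 0))"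

end

theory Submission
  imports Defs "HOL-Probability.Characteristic_Functions"
begin

(* Subtracting the exact iteration from the perturbed one gives
   xt_(n+1) - x_(n+1) = B (xt_n - x_n) + (f_n - f), so, B being nonexpansive,
   ||xt_n - x_n|| <= delta_0 + ... + delta_(n-1) = sigma_n(delta) <= ||sigma_n|| ||delta||_L.
   The exact error is x_n - xs = B^n (x_0 - xs). For a self-adjoint contraction the numbers
   a_k = ||B^k w||^2 decrease and ||B^(2m) w - B^(2n) w||^2 = a_(2m) + a_(2n) - 2 a_(m+n), so the
   even powers B^(2k) w converge to some z with B^2 z = z. Since -1 is not an eigenvalue, B z = z;
   the odd powers then converge to z as well, and z = P w because <B^n w, k> = <w, k> for every
   fixed point k of B. As x_0 and xs have the same projection, x_n -> xs. Quasi-convergence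
   follows because on a window [N_-, N_+] only finitely many ||sigma_n|| occur. *)

lemma linear_funpow:
  fixes B :: "'a::real_vector \<Rightarrow> 'a"
  shows "linear B \<Longrightarrow> linear (B ^^ n)"
  by (induction n) (simp_all add: real_vector.linear_id linear_compose)

lemma norm_le_if_onorm_le_1:
  assumes "bounded_linear B" "onorm B \<le> 1"
  shows "norm (B v) \<le> norm v"
  using onorm[OF assms(1), of v] mult_right_mono[OF assms(2) norm_ge_zero, of v] by linarith

lemma decseq_norm_funpow:
  fixes B :: "'a::real_normed_vector \<Rightarrow> 'a"
  assumes "bounded_linear B" "onorm B \<le> 1"
  shows "decseq (\<lambda>n. norm ((B ^^ n) v))"
  by (rule decseq_SucI) (simp add: norm_le_if_onorm_le_1[OF assms])

lemma inner_funpow_selfadjoint: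
  assumes "\<forall>u v. inner (B u) v = inner u (B v)"
  shows "inner ((B ^^ i) u) ((B ^^ j) v) = inner u ((B ^^ (i + j)) v)"
proof (induction i arbitrary: u)
  case 0
  then show ?case by simp
next
  case (Suc i)
  have "inner ((B ^^ Suc i) u) ((B ^^ j) v) = inner ((B ^^ i) (B u)) ((B ^^ j) v)"
    by (simp add: funpow_Suc_right del: funpow.simps)
  also have "\<dots> = inner u (B ((B ^^ (i + j)) v))"
    using Suc.IH assms by simp
  finally show ?case by simp
qed

lemma selfadjoint_contraction_even_powers_convergent:
  fixes B :: "'a::{real_inner, complete_space} \<Rightarrow> 'a"
  assumes B: "bounded_linear B" "onorm B \<le> 1"
    and B_sa: "\<forall>u v. inner (B u) v = inner u (B v)"
  shows "convergent (\<lambda>k. (B ^^ (2 * k)) w)"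
proof -
  define a where "a k = (norm ((B ^^ k) w))\<^sup>2" for k
  have "decseq a"
    using decseq_norm_funpow[OF B] unfolding a_def decseq_def by (simp add: power_mono)
  then obtain l where a_lim: "a \<longlonglongrightarrow> l" and l_le: "\<And>k. l \<le> a k"
    using decseq_convergent[of a 0] by (auto simp: a_def)
  define z where "z k = (B ^^ (2 * k)) w" for k
  have dist_sq: "(norm (z m - z n))\<^sup>2 = a (2 * m) + a (2 * n) - 2 * a (m + n)" for m n
  proof -
    have zz: "inner (z i) (z j) = inner w ((B ^^ (2 * i + 2 * j)) w)" for i j
      unfolding z_def by (rule inner_funpow_selfadjoint[OF B_sa])
    have aa: "a k = inner w ((B ^^ (k + k)) w)" for k
      unfolding a_def power2_norm_eq_inner by (rule inner_funpow_selfadjoint[OF B_sa])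
    have "m + n + (m + n) = 2 * m + 2 * n"
      by simp
    then have "inner (z m) (z n) = a (m + n)"
      unfolding zz aa by (simp only:)
    moreover have "inner (z k) (z k) = a (2 * k)" for k
      unfolding zz aa ..
    ultimately show ?thesis
      by (simp add: power2_norm_eq_inner inner_diff_left inner_diff_right inner_commute)
  qed
  have "Cauchy z"
  proof (rule CauchyI)
    fix e :: real
    assume "e > 0"
    then obtain M where M: "\<And>k. k \<ge> M \<Longrightarrow> \<bar>a k - l\<bar> < e\<^sup>2 / 4"
      using a_lim unfolding LIMSEQ_def dist_real_def by (meson zero_less_divide_iff zero_less_numeral zero_less_power)
    have "norm (z m - z n) < e" if "m \<ge> M" "n \<ge> M" for m n
    proof -
      have "\<bar>a (2 * m) - l\<bar> < e\<^sup>2 / 4" "\<bar>a (2 * n) - l\<bar> < e\<^sup>2 / 4"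
        using M that by simp_all
      then have "(norm (z m - z n))\<^sup>2 < e\<^sup>2"
        using dist_sq[of m n] l_le[of "m + n"] by linarith
      then show ?thesis
        using \<open>e > 0\<close> by (simp add: power_less_imp_less_base)
    qed
    then show "\<exists>M. \<forall>m\<ge>M. \<forall>n\<ge>M. norm (z m - z n) < e"
      by blast
  qed
  then show ?thesis
    unfolding z_def by (simp add: Cauchy_convergent_iff)
qed

lemma orth_proj_eqI:
  assumes "subspace K" "p \<in> K" "\<And>k. k \<in> K \<Longrightarrow> inner (x - p) k = 0"
  shows "orth_proj K x = p"
  unfolding orth_proj_def
proof (rule the_equality)
  show "p \<in> K \<and> (\<forall>k\<in>K. inner (x - p) k = 0)"
    using assms(2,3) by blast
next
  fix q
  assume q: "q \<in> K \<and> (\<forall>k\<in>K. inner (x - q) k = 0)"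
  then have "p - q \<in> K"
    using assms(1,2) by (simp add: subspace_diff)
  then have "inner (p - q) (p - q) = inner (x - q) (p - q) - inner (x - p) (p - q)"
    by (simp add: inner_diff_left)
  also have "\<dots> = 0"
    using q assms(3) \<open>p - q \<in> K\<close> by simp
  finally show "q = p"
    by simp
qed

lemma selfadjoint_contraction_powers_tendsto_orth_proj:
  fixes B :: "'a::{real_inner, complete_space} \<Rightarrow> 'a"
  assumes B: "bounded_linear B" "onorm B \<le> 1"
    and B_sa: "\<forall>u v. inner (B u) v = inner u (B v)"
    and not_eig: "\<forall>u. B u = - u \<longrightarrow> u = 0"
  shows "(\<lambda>n. (B ^^ n) w) \<longlonglongrightarrow> orth_proj {u. u - B u = 0} w"
proof -
  obtain z where even_lim: "(\<lambda>k. (B ^^ (2 * k)) w) \<longlonglongrightarrow> z"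
    using selfadjoint_contraction_even_powers_convergent[OF B B_sa]
    unfolding convergent_def by blast
  have odd_lim: "(\<lambda>k. (B ^^ (2 * k + 1)) w) \<longlonglongrightarrow> B z"
    using bounded_linear.tendsto[OF B(1) even_lim] by simp
  have "(\<lambda>k. (B ^^ (2 * k + 2)) w) \<longlonglongrightarrow> B (B z)"
    using bounded_linear.tendsto[OF B(1) odd_lim] by simp
  moreover have "(\<lambda>k. (B ^^ (2 * k + 2)) w) \<longlonglongrightarrow> z"
    using LIMSEQ_Suc[OF even_lim] by (simp add: ac_simps)
  ultimately have "B (B z) = z"
    by (rule LIMSEQ_unique)
  then have "B (z - B z) = - (z - B z)"
    using linear_diff[OF bounded_linear.linear[OF B(1)]] by simp
  then have "z - B z = 0"
    using not_eig by blast
  then have Bz: "B z = z"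
    by simp
  have lim: "(\<lambda>n. (B ^^ n) w) \<longlonglongrightarrow> z"
    using limseq_even_odd[OF even_lim] odd_lim by (simp add: Bz)
  have "inner (w - z) k = 0" if "k - B k = 0" for k
  proof -
    have "(B ^^ n) k = k" for n
      using that by (induction n) simp_all
    then have "inner ((B ^^ n) w) k = inner w k" for n
      using inner_funpow_selfadjoint[OF B_sa, of n w 0 k] by simp
    then have "(\<lambda>n. inner ((B ^^ n) w) k) \<longlonglongrightarrow> inner w k"
      by simp
    moreover have "(\<lambda>n. inner ((B ^^ n) w) k) \<longlonglongrightarrow> inner z k"
      by (intro tendsto_inner lim tendsto_const)
    ultimately have "inner z k = inner w k"
      by (rule LIMSEQ_unique[rotated])
    then show ?thesis
      by (simp add: inner_diff_left)
  qed
  moreover have "subspace {u. u - B u = 0}"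
    using bounded_linear_sub[OF bounded_linear_ident B(1)]
    by (intro linear_subspace_kernel bounded_linear.linear)
  ultimately have "orth_proj {u. u - B u = 0} w = z"
    using Bz by (intro orth_proj_eqI) simp_all
  then show ?thesis
    using lim by simp
qed

lemma affine_iteration_minus_fixed_point:
  fixes B :: "'a::real_vector \<Rightarrow> 'a"
  assumes "linear B" "\<And>n. x (Suc n) = B (x n) + f" "xs = B xs + f"
  shows "x n - xs = (B ^^ n) (x 0 - xs)"
proof (induction n)
  case 0
  then show ?case by simp
next
  case (Suc n)
  have "x (Suc n) - xs = B (x n - xs)"
    using assms by (metis add_diff_cancel_right linear_diff)
  then show ?case
    using Suc.IH by simp
qed

lemma selfadjoint_contraction_iteration_tendsto:
  fixes B :: "'a::{real_inner, complete_space} \<Rightarrow> 'a"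
  assumes B: "bounded_linear B" "onorm B \<le> 1"
    and B_sa: "\<forall>u v. inner (B u) v = inner u (B v)"
    and not_eig: "\<forall>u. B u = - u \<longrightarrow> u = 0"
    and x: "\<And>n. x (Suc n) = B (x n) + f"
    and xs: "xs = B xs + f"
    and proj: "orth_proj {u. u - B u = 0} xs = orth_proj {u. u - B u = 0} (x 0)"
  shows "x \<longlonglongrightarrow> xs"
proof -
  note powers_lim = selfadjoint_contraction_powers_tendsto_orth_proj[OF B B_sa not_eig]
  have "(\<lambda>n. (B ^^ n) (x 0) - (B ^^ n) xs) \<longlonglongrightarrow> 0"
    using tendsto_diff[OF powers_lim[of "x 0"] powers_lim[of xs]] unfolding proj by simp
  then have "(\<lambda>n. x n - xs) \<longlonglongrightarrow> 0"
    using affine_iteration_minus_fixed_point[OF bounded_linear.linear[OF B(1)], of x f xs] x xs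
      linear_diff[OF linear_funpow[OF bounded_linear.linear[OF B(1)]]]
    by simp
  then show ?thesis
    by (simp add: LIM_zero_iff)
qed

lemma perturbed_iteration_dist_le_sigma:
  fixes B :: "'a::real_normed_vector \<Rightarrow> 'a"
  assumes B: "bounded_linear B" "onorm B \<le> 1"
    and x: "\<And>n. x (Suc n) = B (x n) + f"
    and y: "\<And>n. y (Suc n) = B (y n) + g n" "y 0 = x 0"
    and g: "\<And>n. norm (g n - f) \<le> \<delta> n"
  shows "norm (y n - x n) \<le> sigma n \<delta>"
proof (induction n)
  case 0
  then show ?case
    using y(2) by (simp add: sigma_def)
next
  case (Suc n)
  have "y (Suc n) - x (Suc n) = B (y n - x n) + (g n - f)"
    using x y(1) linear_diff[OF bounded_linear.linear[OF B(1)]] by simp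
  then have "norm (y (Suc n) - x (Suc n)) \<le> norm (B (y n - x n)) + norm (g n - f)"
    by (metis norm_triangle_ineq)
  also have "\<dots> \<le> sigma n \<delta> + \<delta> n"
    using norm_le_if_onorm_le_1[OF B, of "y n - x n"] Suc.IH g[of n] by linarith
  finally show ?case
    by (simp add: sigma_def)
qed

lemma abs_sigma_le_sigma_norm:
  assumes L: "seq_banach_space Ls nL" "sigmas_bounded Ls nL" and a: "a \<in> Ls"
  shows "\<bar>sigma n a\<bar> \<le> sigma_norm Ls nL n * nL a"
proof -
  have nL_definite: "\<And>b. b \<in> Ls \<Longrightarrow> 0 \<le> nL b \<and> (nL b = 0 \<longleftrightarrow> b = (\<lambda>k. 0))"
    and scale: "\<And>b c. b \<in> Ls \<Longrightarrow> (\<lambda>k. c * b k) \<in> Ls \<and> nL (\<lambda>k. c * b k) = \<bar>c\<bar> * nL b"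
    using L(1) unfolding seq_banach_space_def by auto
  obtain C where C: "\<And>b. b \<in> Ls \<Longrightarrow> \<bar>sigma n b\<bar> \<le> C * nL b"
    using L(2) unfolding sigmas_bounded_def by blast
  let ?S = "{\<bar>sigma n b\<bar> | b. b \<in> Ls \<and> nL b \<le> 1}"
  have "bdd_above ?S"
  proof (rule bdd_aboveI)
    fix s
    assume "s \<in> ?S"
    then obtain b where "s = \<bar>sigma n b\<bar>" "b \<in> Ls" "nL b \<le> 1"
      by blast
    moreover have "C * nL b \<le> \<bar>C\<bar> * 1"
      using nL_definite[of b] \<open>b \<in> Ls\<close> \<open>nL b \<le> 1\<close> by (intro mult_mono) auto
    ultimately show "s \<le> \<bar>C\<bar>"
      using C[of b] by simp
  qed
  show ?thesis
  proof (cases "nL a = 0")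
    case True
    then show ?thesis
      using nL_definite[OF a] by (simp add: sigma_def)
  next
    case False
    then have pos: "nL a > 0"
      using nL_definite[OF a] by simp
    define b where "b = (\<lambda>k. a k / nL a)"
    have "b \<in> Ls" "nL b = 1"
      using scale[OF a, of "1 / nL a"] pos by (simp_all add: b_def)
    then have "\<bar>sigma n b\<bar> \<le> sigma_norm Ls nL n"
      unfolding sigma_norm_def using \<open>bdd_above ?S\<close> by (intro cSup_upper) auto
    moreover have "sigma n b = sigma n a / nL a"
      by (simp add: sigma_def b_def sum_divide_distrib)
    ultimately show ?thesis
      using pos by (simp add: abs_div pos_divide_le_eq)
  qed
qed

lemma perturbed_iteration_error_le:
  fixes B :: "'a::real_normed_vector \<Rightarrow> 'a"
  assumes L: "seq_banach_space Ls nL" "sigmas_bounded Ls nL"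
    and B: "bounded_linear B" "onorm B \<le> 1"
    and x: "\<And>n. x (Suc n) = B (x n) + f"
    and y: "\<And>n. y (Suc n) = B (y n) + g n" "y 0 = x 0"
    and g: "\<And>n. norm (g n - f) \<le> \<delta> n" "\<delta> \<in> Ls"
  shows "norm (y n - xs) \<le> norm (x n - xs) + sigma_norm Ls nL n * nL \<delta>"
proof -
  have "norm (y n - x n) \<le> sigma n \<delta>"
    by (rule perturbed_iteration_dist_le_sigma[OF B x y g(1)])
  also have "\<dots> \<le> sigma_norm Ls nL n * nL \<delta>"
    using abs_sigma_le_sigma_norm[OF L g(2), of n] by simp
  finally show ?thesis
    using norm_triangle_ineq[of "y n - x n" "x n - xs"] by simp
qed

lemma ex_uniformly_small_multiples:
  fixes c :: "nat \<Rightarrow> real"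
  assumes "\<epsilon> > 0"
  shows "\<exists>\<eta>>0. \<forall>t n. 0 \<le> t \<and> t < \<eta> \<and> n \<le> M \<longrightarrow> c n * t < \<epsilon>"
proof -
  define S where "S = 1 + (\<Sum>n\<le>M. \<bar>c n\<bar>)"
  have S_pos: "S > 0"
    unfolding S_def by (simp add: add_pos_nonneg sum_nonneg)
  have "c n * t < \<epsilon>" if "0 \<le> t" "t < \<epsilon> / S" "n \<le> M" for t n
  proof -
    have "\<bar>c n\<bar> \<le> S"
      unfolding S_def using member_le_sum[of n "{..M}" "\<lambda>n. \<bar>c n\<bar>"] that(3) by simp
    then have "c n * t \<le> S * t"
      using that(1) by (intro mult_right_mono) auto
    also have "\<dots> < \<epsilon>"
      using that(2) S_pos by (simp add: pos_less_divide_eq mult.commute)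
    finally show ?thesis .
  qed
  then show ?thesis
    using assms S_pos by (intro exI[of _ "\<epsilon> / S"]) auto
qed

(* The paper's quasi-convergence: p ranges over admissible perturbation data, s p is the size
   of the perturbation (there ||delta||_L) and d p n the error of the n-th perturbed iterate. *)
definition quasi_converges :: "('p \<Rightarrow> bool) \<Rightarrow> ('p \<Rightarrow> real) \<Rightarrow> ('p \<Rightarrow> nat \<Rightarrow> real) \<Rightarrow> bool" where
  "quasi_converges P s d \<longleftrightarrow>
     (\<forall>\<epsilon>>0. \<exists>N. \<forall>Nm Np. N \<le> Nm \<and> Nm < Np \<longrightarrow>
        (\<exists>\<eta>>0. \<forall>p. P p \<and> s p < \<eta> \<longrightarrow> (\<forall>n. Nm \<le> n \<and> n \<le> Np \<longrightarrow> d p n < \<epsilon>)))"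

lemma quasi_convergesI:
  fixes e c :: "nat \<Rightarrow> real"
  assumes e: "e \<longlonglongrightarrow> 0"
    and d: "\<And>p n. P p \<Longrightarrow> d p n \<le> e n + c n * s p"
    and s: "\<And>p. P p \<Longrightarrow> 0 \<le> s p"
  shows "quasi_converges P s d"
  unfolding quasi_converges_def
proof (intro allI impI)
  fix \<epsilon> :: real
  assume "\<epsilon> > 0"
  then obtain N where N: "\<And>n. n \<ge> N \<Longrightarrow> \<bar>e n\<bar> < \<epsilon> / 2"
    using e unfolding LIMSEQ_def dist_real_def by (metis diff_zero half_gt_zero)
  have "\<exists>\<eta>>0. \<forall>p. P p \<and> s p < \<eta> \<longrightarrow> (\<forall>n. Nm \<le> n \<and> n \<le> Np \<longrightarrow> d p n < \<epsilon>)"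
    if "N \<le> Nm" for Nm Np
  proof -
    obtain \<eta> where "\<eta> > 0"
      and \<eta>: "\<And>t n. 0 \<le> t \<Longrightarrow> t < \<eta> \<Longrightarrow> n \<le> Np \<Longrightarrow> c n * t < \<epsilon> / 2"
      using ex_uniformly_small_multiples[where \<epsilon> = "\<epsilon> / 2" and c = c and M = Np] \<open>\<epsilon> > 0\<close>
      by auto
    have "d p n < \<epsilon>" if "P p" "s p < \<eta>" "Nm \<le> n" "n \<le> Np" for p n
      using d[of p n] s[of p] N[of n] \<eta>[of "s p" n] that \<open>N \<le> Nm\<close> by linarith
    then show ?thesis
      using \<open>\<eta> > 0\<close> by blast
  qed
  then show "\<exists>N. \<forall>Nm Np. N \<le> Nm \<and> Nm < Np \<longrightarrow>
      (\<exists>\<eta>>0. \<forall>p. P p \<and> s p < \<eta> \<longrightarrow> (\<forall>n. Nm \<le> n \<and> n \<le> Np \<longrightarrow> d p n < \<epsilon>))"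
    by blast
qed

theorem theorem1p7:
  fixes B :: "'a::{real_inner, complete_space} \<Rightarrow> 'a"
    and f x0 xs :: 'a
    and x :: "nat \<Rightarrow> 'a"
    and Ls :: "(nat \<Rightarrow> real) set" and nL :: "(nat \<Rightarrow> real) \<Rightarrow> real"
  assumes L: "seq_banach_space Ls nL" "monotone_seq_norm Ls nL" "sigmas_bounded Ls nL"
    and B_lin: "bounded_linear B"
    and B_sa: "\<forall>u v. inner (B u) v = inner u (B v)"
    and B_rho: "spectral_radius_op B = 1"
    and B_norm: "onorm B = 1"
    and not_eig: "\<forall>u. B u = - u \<longrightarrow> u = 0"
    and solvable: "\<exists>u. u = B u + f"
    and x_0: "x 0 = x0"
    and x_Suc: "\<forall>n. x (Suc n) = B (x n) + f"
    and xs_sol: "xs = B xs + f"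
    and xs_proj: "orth_proj {u. u - B u = 0} xs = orth_proj {u. u - B u = 0} x0"
  shows
    "(\<forall>fs :: nat \<Rightarrow> 'a. \<forall>\<delta>s :: nat \<Rightarrow> real. \<forall>xt :: nat \<Rightarrow> 'a.
        (\<forall>n. \<delta>s n \<ge> 0) \<and> \<delta>s \<in> Ls \<and> (\<forall>n. norm (fs n - f) \<le> \<delta>s n) \<and>
        xt 0 = x0 \<and> (\<forall>n. xt (Suc n) = B (xt n) + fs n) \<longrightarrow>
        (\<forall>n. norm (xt n - xs) \<le> norm (x n - xs) + sigma_norm Ls nL n * nL \<delta>s))
   \<and> (\<forall>\<epsilon>>0. \<exists>N. \<forall>Nm Np. N \<le> Nm \<and> Nm < Np \<longrightarrow>
        (\<exists>\<eta>>0. \<forall>fs :: nat \<Rightarrow> 'a. \<forall>\<delta>s :: nat \<Rightarrow> real. \<forall>xt :: nat \<Rightarrow> 'a.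
          (\<forall>n. \<delta>s n \<ge> 0) \<and> \<delta>s \<in> Ls \<and> (\<forall>n. norm (fs n - f) \<le> \<delta>s n) \<and>
          xt 0 = x0 \<and> (\<forall>n. xt (Suc n) = B (xt n) + fs n) \<and> nL \<delta>s < \<eta> \<longrightarrow>
          (\<forall>n. Nm \<le> n \<and> n \<le> Np \<longrightarrow> norm (xt n - xs) < \<epsilon>)))"
proof -
  have B_contr: "onorm B \<le> 1"
    using B_norm by simp
  define P :: "(nat \<Rightarrow> 'a) \<times> (nat \<Rightarrow> real) \<times> (nat \<Rightarrow> 'a) \<Rightarrow> bool" where
    "P = (\<lambda>(fs, \<delta>s, xt). (\<forall>n. \<delta>s n \<ge> 0) \<and> \<delta>s \<in> Ls \<and> (\<forall>n. norm (fs n - f) \<le> \<delta>s n) \<and>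
        xt 0 = x0 \<and> (\<forall>n. xt (Suc n) = B (xt n) + fs n))"
  have bound: "norm (xt n - xs) \<le> norm (x n - xs) + sigma_norm Ls nL n * nL \<delta>s"
    if "P (fs, \<delta>s, xt)" for fs \<delta>s xt n
    using perturbed_iteration_error_le[OF L(1,3) B_lin B_contr, of x f xt fs \<delta>s] x_Suc x_0 that
    unfolding P_def by simp
  have "x \<longlonglongrightarrow> xs"
    using selfadjoint_contraction_iteration_tendsto[OF B_lin B_contr B_sa not_eig] x_Suc xs_sol
      xs_proj x_0 by simp
  then have x_lim: "(\<lambda>n. norm (x n - xs)) \<longlonglongrightarrow> 0"
    by (simp add: LIM_zero_iff tendsto_norm_zero_iff)
  have nL_nonneg: "0 \<le> nL \<delta>s" if "\<delta>s \<in> Ls" for \<delta>s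
    using L(1) that unfolding seq_banach_space_def by blast
  have "quasi_converges P (\<lambda>p. nL (fst (snd p))) (\<lambda>p n. norm (snd (snd p) n - xs))"
    by (rule quasi_convergesI[where c = "sigma_norm Ls nL", OF x_lim])
      (simp_all add: split_paired_all bound, simp add: P_def nL_nonneg)
  note windows = this[unfolded quasi_converges_def P_def prod.case split_paired_All
      fst_conv snd_conv conj_assoc]
  show ?thesis
    by (intro conjI) (use bound[unfolded P_def prod.case] in blast, fact windows)
qed

end
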